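(* Every left nilpotent monoid and every supernilpotent monoid is cancellative.
   Context: Monoids are regarded as semigroups $(S,\cdot)$. For congruences $\alpha_1,\dots,\alpha_n$, $M(\alpha_1,\dots,\alpha_n)$ is the subsemigroup of $S^{\{0,1\}^n}$ generated by all $g$ such that for some $i$ and $(a,b)\in\alpha_i$, $g(x)=a$ if $x_i=0$ and $g(x)=b$ if $x_i=1$; $[\alpha_1,\dots,\alpha_n]$ is the smallest congruence $\delta$ such that for all $f\in M(\alpha_1,\dots,\alpha_n)$: if $(f(x0),f(x1))\in\delta$ for all $x\in\{0,1\}^{n-1}\setminus\{(1,\dots,1)\}$ then $(f(1,\dots,1,0),f(1,\dots,1,1))\in\delta$. With $1$ total and $0$ trivial congruence: $(1]^1=1$, $(1]^{k+1}=[1,(1]^k]$. $S$ is left nilpotent if $(1]^{d+1}=0$ for some $d\in\mathbb N$, and supernilpotent if the $(d+1)$-ary commutator $[1,\dots,1]=0$ for some $d\in\mathbb N$. *)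

theory Defs
  imports Main
begin

text \<open>Monoids are type-class monoids 'a :: monoid_mult, regarded as semigroups
(the whole type is the carrier). Relations are sets of pairs.\<close>

definition is_congruence :: "'a::semigroup_mult rel \<Rightarrow> bool" where
  "is_congruence \<alpha> \<longleftrightarrow> equiv UNIV \<alpha> \<and>
     (\<forall>a b c d. (a, b) \<in> \<alpha> \<longrightarrow> (c, d) \<in> \<alpha> \<longrightarrow> (a * c, b * d) \<in> \<alpha>)"

text \<open>Points of {0,1}^n are boolean lists of length n (False = 0, True = 1),
coordinates indexed 0..n-1. Functions {0,1}^n \<rightarrow> S are functions on bool lists;
only their values on lists of length n matter.\<close>

inductive_set Mset :: "'a::semigroup_mult rel list \<Rightarrow> (bool list \<Rightarrow> 'a) set"
  for \<alpha>s :: "'a rel list" where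
  gen: "i < length \<alpha>s \<Longrightarrow> (a, b) \<in> \<alpha>s ! i \<Longrightarrow>
          (\<lambda>x. if x ! i then b else a) \<in> Mset \<alpha>s"
| mult: "f \<in> Mset \<alpha>s \<Longrightarrow> g \<in> Mset \<alpha>s \<Longrightarrow> (\<lambda>x. f x * g x) \<in> Mset \<alpha>s"

definition comm_closed :: "'a::semigroup_mult rel list \<Rightarrow> 'a rel \<Rightarrow> bool" where
  "comm_closed \<alpha>s \<delta> \<longleftrightarrow>
     (\<forall>f \<in> Mset \<alpha>s.
        (\<forall>x. length x = length \<alpha>s - 1 \<and> x \<noteq> replicate (length \<alpha>s - 1) True \<longrightarrow>
              (f (x @ [False]), f (x @ [True])) \<in> \<delta>) \<longrightarrow>
        (f (replicate (length \<alpha>s - 1) True @ [False]),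
         f (replicate (length \<alpha>s - 1) True @ [True])) \<in> \<delta>)"

definition commutator :: "'a::semigroup_mult rel list \<Rightarrow> 'a rel" where
  "commutator \<alpha>s = \<Inter> {\<delta>. is_congruence \<delta> \<and> comm_closed \<alpha>s \<delta>}"

text \<open>(1]^1 = 1, (1]^(k+1) = [1, (1]^k]; left_comm_power k = (1]^(k+1).\<close>
fun left_comm_power :: "nat \<Rightarrow> 'a::semigroup_mult rel" where
  "left_comm_power 0 = UNIV"
| "left_comm_power (Suc k) = commutator [UNIV, left_comm_power k]"

definition left_nilpotent :: "'a::semigroup_mult itself \<Rightarrow> bool" where
  "left_nilpotent _ \<longleftrightarrow> (\<exists>d::nat. (left_comm_power d :: 'a rel) = Id)"

definition supernilpotent :: "'a::semigroup_mult itself \<Rightarrow> bool" where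
  "supernilpotent _ \<longleftrightarrow> (\<exists>d::nat. commutator (replicate (d + 1) (UNIV :: 'a rel)) = Id)"

definition cancellative :: "'a::semigroup_mult itself \<Rightarrow> bool" where
  "cancellative _ \<longleftrightarrow>
     (\<forall>a b c :: 'a. (a * b = a * c \<longrightarrow> b = c) \<and> (b * a = c * a \<longrightarrow> b = c))"

end

theory Submission
  imports Defs
begin

text \<open>Suppose \<open>a * b = a * c\<close>, and let \<open>h\<close> be the generator that is \<open>b\<close> or \<open>c\<close> according to the
last coordinate. Multiplying \<open>h\<close> by the generators \<open>x \<mapsto> (if x\<^sub>i then 1 else a)\<close>, which exist
because \<open>(a, 1)\<close> lies in the total congruence, yields \<open>f x = a\<^sup>k * h x\<close> with \<open>k\<close> the number
of zeros among the first \<open>n - 1\<close> coordinates of \<open>x\<close>. Off the all-ones point \<open>k > 0\<close>, so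
\<open>f (x0) = a\<^sup>k * b = a\<^sup>k * c = f (x1)\<close>, and the defining closure property forces
\<open>(b, c) = (f (1\<dots>10), f (1\<dots>11))\<close> into the commutator. So a trivial commutator
\<open>[1, \<dots>, 1, \<alpha>]\<close> forces \<open>b = c\<close>; right cancellation is symmetric.\<close>

definition zeros_below :: "nat \<Rightarrow> bool list \<Rightarrow> nat" where
  "zeros_below j x = length (filter (\<lambda>i. \<not> x ! i) [0..<j])"

lemma zeros_below_Suc:
  "zeros_below (Suc j) x = (if x ! j then zeros_below j x else Suc (zeros_below j x))"
  by (simp add: zeros_below_def)

lemma zeros_below_append:
  "j \<le> length x \<Longrightarrow> zeros_below j (x @ ys) = zeros_below j x"
  unfolding zeros_below_def by (intro arg_cong[where f = length] filter_cong) (auto simp: nth_append)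

lemma zeros_below_replicate_True: "zeros_below m (replicate m True) = 0"
  by (simp add: zeros_below_def)

lemma zeros_below_pos:
  assumes "length x = m" and "x \<noteq> replicate m True"
  shows "0 < zeros_below m x"
proof -
  obtain i where "i < m" and "\<not> x ! i"
    using assms by (metis (full_types) length_replicate nth_equalityI nth_replicate)
  then show ?thesis by (auto simp: zeros_below_def filter_empty_conv)
qed

lemma Mset_zeros_power_mult:
  fixes a :: "'a::monoid_mult"
  assumes "j \<le> length \<alpha>s" and "\<forall>i<j. (a, 1) \<in> \<alpha>s ! i" and "h \<in> Mset \<alpha>s"
  shows "(\<lambda>x. a ^ zeros_below j x * h x) \<in> Mset \<alpha>s"
  using assms
proof (induction j)
  case 0
  then show ?case by (simp add: zeros_below_def)
next
  case (Suc j)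
  have "(\<lambda>x. if x ! j then 1 else a) \<in> Mset \<alpha>s"
    using Suc.prems by (intro Mset.gen) auto
  moreover have "(\<lambda>x. (if x ! j then 1 else a) * (a ^ zeros_below j x * h x))
      = (\<lambda>x. a ^ zeros_below (Suc j) x * h x)"
    by (auto simp: zeros_below_Suc mult.assoc)
  ultimately show ?case
    using Mset.mult Suc by fastforce
qed

lemma Mset_mult_zeros_power:
  fixes a :: "'a::monoid_mult"
  assumes "j \<le> length \<alpha>s" and "\<forall>i<j. (a, 1) \<in> \<alpha>s ! i" and "h \<in> Mset \<alpha>s"
  shows "(\<lambda>x. h x * a ^ zeros_below j x) \<in> Mset \<alpha>s"
  using assms
proof (induction j)
  case 0
  then show ?case by (simp add: zeros_below_def)
next
  case (Suc j)
  have "(\<lambda>x. if x ! j then 1 else a) \<in> Mset \<alpha>s"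
    using Suc.prems by (intro Mset.gen) auto
  moreover have "(\<lambda>x. (h x * a ^ zeros_below j x) * (if x ! j then 1 else a))
      = (\<lambda>x. h x * a ^ zeros_below (Suc j) x)"
    by (auto simp: zeros_below_Suc mult.assoc power_Suc2 simp del: power_Suc)
  ultimately show ?case
    using Mset.mult Suc by fastforce
qed

lemma commutator_contains_last_pair:
  assumes "f \<in> Mset \<alpha>s" and "length \<alpha>s = Suc m"
    and "\<And>x. length x = m \<Longrightarrow> x \<noteq> replicate m True \<Longrightarrow> f (x @ [False]) = f (x @ [True])"
  shows "(f (replicate m True @ [False]), f (replicate m True @ [True])) \<in> commutator \<alpha>s"
  unfolding commutator_def
proof (intro InterI, clarify)
  fix \<delta> :: "'a rel"
  assume "is_congruence \<delta>" and "comm_closed \<alpha>s \<delta>"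
  then have "Id \<subseteq> \<delta>"
    by (auto simp: is_congruence_def equiv_def refl_on_def)
  with assms(3) have "(f (x @ [False]), f (x @ [True])) \<in> \<delta>"
    if "length x = m" and "x \<noteq> replicate m True" for x
    using that by auto
  with \<open>comm_closed \<alpha>s \<delta>\<close> assms(1,2)
  show "(f (replicate m True @ [False]), f (replicate m True @ [True])) \<in> \<delta>"
    unfolding comm_closed_def by simp
qed

lemma cancellable_pair_in_commutator:
  fixes a b c :: "'a::monoid_mult"
  assumes len: "length \<alpha>s = Suc m" and a1: "\<forall>i<m. (a, 1) \<in> \<alpha>s ! i" and bc: "(b, c) \<in> \<alpha>s ! m"
    and cancel: "a * b = a * c \<or> b * a = c * a"
  shows "(b, c) \<in> commutator \<alpha>s"
proof -
  define h where "h = (\<lambda>x::bool list. if x ! m then c else b)"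
  have "h \<in> Mset \<alpha>s"
    unfolding h_def using len bc by (intro Mset.gen) auto
  have h_last: "h (x @ [False]) = b" "h (x @ [True]) = c" if "length x = m" for x
    using that by (auto simp: h_def nth_append)
  have "m \<le> length \<alpha>s"
    using len by simp
  from cancel show ?thesis
  proof
    assume abc: "a * b = a * c"
    let ?f = "\<lambda>x. a ^ zeros_below m x * h x"
    have "a ^ k * b = a ^ k * c" if "0 < k" for k
      using that abc by (cases k) (simp_all del: power_Suc add: power_Suc2 mult.assoc)
    then have "?f (x @ [False]) = ?f (x @ [True])"
      if "length x = m" and "x \<noteq> replicate m True" for x
      using that zeros_below_pos[OF that] by (simp add: zeros_below_append h_last)
    from commutator_contains_last_pair[OF Mset_zeros_power_mult[OF \<open>m \<le> length \<alpha>s\<close> a1 \<open>h \<in> Mset \<alpha>s\<close>] len this]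
    show ?thesis
      by (simp add: zeros_below_append zeros_below_replicate_True h_last)
  next
    assume abc: "b * a = c * a"
    let ?f = "\<lambda>x. h x * a ^ zeros_below m x"
    have "b * a ^ k = c * a ^ k" if "0 < k" for k
      using that abc by (cases k) (simp_all add: mult.assoc[symmetric])
    then have "?f (x @ [False]) = ?f (x @ [True])"
      if "length x = m" and "x \<noteq> replicate m True" for x
      using that zeros_below_pos[OF that] by (simp add: zeros_below_append h_last)
    from commutator_contains_last_pair[OF Mset_mult_zeros_power[OF \<open>m \<le> length \<alpha>s\<close> a1 \<open>h \<in> Mset \<alpha>s\<close>] len this]
    show ?thesis
      by (simp add: zeros_below_append zeros_below_replicate_True h_last)
  qed
qed

lemma cancellable_pair_in_left_comm_power:
  fixes a b c :: "'a::monoid_mult"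
  assumes "a * b = a * c \<or> b * a = c * a"
  shows "(b, c) \<in> left_comm_power k"
proof (induction k)
  case 0
  then show ?case by simp
next
  case (Suc k)
  then show ?case
    using cancellable_pair_in_commutator[of "[UNIV, left_comm_power k]" 1 a b c] assms by simp
qed

lemma cancellable_pair_in_total_commutator:
  fixes a b c :: "'a::monoid_mult"
  assumes "a * b = a * c \<or> b * a = c * a"
  shows "(b, c) \<in> commutator (replicate (Suc d) UNIV)"
  using cancellable_pair_in_commutator[of "replicate (Suc d) UNIV" d a b c] assms
  by (simp del: replicate_Suc add: nth_replicate)

lemma cancellativeI:
  assumes "\<And>a b c :: 'a::monoid_mult. a * b = a * c \<or> b * a = c * a \<Longrightarrow> (b, c) \<in> Id"
  shows "cancellative TYPE('a)"
  using assms unfolding cancellative_def by blast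

theorem lemma4p3:
  shows "(left_nilpotent TYPE('a::monoid_mult) \<longrightarrow> cancellative TYPE('a))
       \<and> (supernilpotent TYPE('a) \<longrightarrow> cancellative TYPE('a))"
proof (intro conjI impI)
  assume "left_nilpotent TYPE('a)"
  then obtain d where "(left_comm_power d :: 'a rel) = Id"
    unfolding left_nilpotent_def by blast
  then show "cancellative TYPE('a)"
    using cancellable_pair_in_left_comm_power by (intro cancellativeI) blast
next
  assume "supernilpotent TYPE('a)"
  then obtain d where "commutator (replicate (Suc d) (UNIV :: 'a rel)) = Id"
    unfolding supernilpotent_def by auto
  then show "cancellative TYPE('a)"
    using cancellable_pair_in_total_commutator by (intro cancellativeI) blast
qed

end
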